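(* Let $\vec{\alpha}=\langle\alpha_s:s\in[\mathbb{N}]^{<\infty}\rangle$ be a sequence of nonstandard hypernatural numbers and let $n\in\mathbb{N}$. For every $A\subseteq[\mathbb{N}]^n$ and every $\vec{\alpha}$-tree $T$ there exists an $\vec{\alpha}$-tree $S\subseteq T$ with $st(S)=st(T)$ such that either $S(n)\subseteq A$ or $S(n)\cap A=\emptyset$.
   Context: Setting (Alpha-Theory of Benci–Di Nasso): ZFC together with a new symbol $\alpha$ satisfying: ($\alpha$1) every sequence $\varphi=\langle\varphi_i:i\in\mathbb{N}\rangle$ has a unique ideal value $\varphi[\alpha]$; ($\alpha$2) if $\varphi[\alpha]=\psi[\alpha]$ and $f\circ\varphi$, $f\circ\psi$ make sense then $(f\circ\varphi)[\alpha]=(f\circ\psi)[\alpha]$; ($\alpha$3) constant real sequences $r$ have ideal value $r$, and $\langle i\rangle$ has ideal value $\alpha\notin\mathbb{N}$; ($\alpha$4) if $\vartheta_i=\{\varphi_i,\psi_i\}$ then $\vartheta[\alpha]=\{\varphi[\alpha],\psi[\alpha]\}$; ($\alpha$5) the constant sequence $\emptyset$ has ideal value $\emptyset$, and for nonempty $\psi_i$, $\psi[\alpha]=\{\vartheta[\alpha]:\vartheta_i\in\psi_i\ \forall i\}$. ${}^*A$ is the ideal value of the constant sequence $A$; elements of ${}^*\mathbb{N}\setminus\mathbb{N}$ are nonstandard hypernatural numbers. $[X]^n$, $[X]^{<\infty}$, $[X]^\infty$: $n$-element, finite, infinite subsets of $X\subseteq\mathbb{N}$. For finite $s$, $s\sqsubseteq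 X$ means $s=\{j\in X:j\le i\}$ for some $i$. A tree on $\mathbb{N}$ is a nonempty $T\subseteq[\mathbb{N}]^{<\infty}$ closed under $\sqsubseteq$-initial segments; $T(n)=\{s\in T:|s|=n\}$; stem $st(T)$ = $\sqsubseteq$-maximal $s\in T$ comparable with all elements of $T$; $T/s=\{t\in T:s\sqsubseteq t\}$. An $\vec{\alpha}$-tree is a tree $T$ with a stem, $T/st(T)\neq\emptyset$, and $s\cup\{\alpha_s\}\in{}^*T$ for all $s\in T/st(T)$. *)

theory Defs
  imports Main
begin

text \<open>Model of Alpha-Theory: the ideal value of a sequence is its class in the
ultrapower modulo the nonprincipal ultrafilter U = {X. alpha in *X} on nat.
A hypernatural is represented by a sequence nat => nat; it is nonstandard iff
it differs U-almost everywhere from every standard k.\<close>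

definition nonprincipal_ultrafilter :: "nat set set \<Rightarrow> bool" where
  "nonprincipal_ultrafilter U \<longleftrightarrow>
     UNIV \<in> U \<and> {} \<notin> U \<and>
     (\<forall>X Y. X \<in> U \<longrightarrow> X \<subseteq> Y \<longrightarrow> Y \<in> U) \<and>
     (\<forall>X Y. X \<in> U \<longrightarrow> Y \<in> U \<longrightarrow> X \<inter> Y \<in> U) \<and>
     (\<forall>X. X \<in> U \<or> - X \<in> U) \<and>
     (\<forall>X. finite X \<longrightarrow> X \<notin> U)"

definition nonstandard_hypernat :: "nat set set \<Rightarrow> (nat \<Rightarrow> nat) \<Rightarrow> bool" where
  "nonstandard_hypernat U \<phi> \<longleftrightarrow> (\<forall>k::nat. {i. \<phi> i \<noteq> k} \<in> U)"

definition init_seg :: "nat set \<Rightarrow> nat set \<Rightarrow> bool" where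
  "init_seg s X \<longleftrightarrow> finite s \<and> (\<exists>i. s = {j \<in> X. j < i})"

definition is_tree :: "nat set set \<Rightarrow> bool" where
  "is_tree T \<longleftrightarrow> T \<noteq> {} \<and> (\<forall>t\<in>T. finite t) \<and>
     (\<forall>t\<in>T. \<forall>s. init_seg s t \<longrightarrow> s \<in> T)"

definition level :: "nat set set \<Rightarrow> nat \<Rightarrow> nat set set" where
  "level T n = {s \<in> T. card s = n}"

definition comparable_all :: "nat set set \<Rightarrow> nat set \<Rightarrow> bool" where
  "comparable_all T s \<longleftrightarrow> (\<forall>t\<in>T. init_seg s t \<or> init_seg t s)"

definition is_stem :: "nat set set \<Rightarrow> nat set \<Rightarrow> bool" where
  "is_stem T s \<longleftrightarrow> s \<in> T \<and> comparable_all T s \<and>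
     (\<forall>s'\<in>T. comparable_all T s' \<longrightarrow> init_seg s s' \<longrightarrow> s' = s)"

definition has_stem :: "nat set set \<Rightarrow> bool" where
  "has_stem T \<longleftrightarrow> (\<exists>s. is_stem T s)"

definition stem :: "nat set set \<Rightarrow> nat set" where
  "stem T = (THE s. is_stem T s)"

definition tree_above :: "nat set set \<Rightarrow> nat set \<Rightarrow> nat set set" where
  "tree_above T s = {t \<in> T. init_seg s t}"

text \<open>alpha-tree: s \<union> {alpha_s} \<in> *T, i.e. {i. s \<union> {alph s i} \<in> T} \<in> U.\<close>
definition alpha_tree ::
  "nat set set \<Rightarrow> (nat set \<Rightarrow> nat \<Rightarrow> nat) \<Rightarrow> nat set set \<Rightarrow> bool" where
  "alpha_tree U alph T \<longleftrightarrow> is_tree T \<and> has_stem T \<and>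
     tree_above T (stem T) \<noteq> {} \<and>
     (\<forall>s\<in>tree_above T (stem T). {i. s \<union> {alph s i} \<in> T} \<in> U)"

end

theory Submission
  imports Defs
begin

text \<open>Colour a node t above the stem by whether U-almost every chain of \<open>n - |t|\<close> successive
  \<open>\<alpha>\<close>-extensions of t lands in A, i.e. by whether \<open>t \<union> {\<alpha>\<^sub>t, \<alpha>\<^sub>t\<^sub>', \<dots>} \<in> \<^sup>*A\<close>.
  By the ultrafilter property, U-almost every \<open>\<alpha>\<close>-child of t has the colour of t, so pruning T
  to the nodes whose segments above the stem all carry the colour of the stem leaves an
  \<open>\<alpha>\<close>-tree with the same stem whose level n is monochromatic. The stem does not grow, because
  U-almost every \<open>\<alpha>\<^sub>s\<^sub>t(i)\<close> gives a child of the stem and these take infinitely many values.\<close>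

lemma init_seg_subset: "init_seg s X \<Longrightarrow> s \<subseteq> X"
  by (auto simp: init_seg_def)

lemma init_seg_refl:
  assumes "finite s" shows "init_seg s s"
proof -
  obtain m where "\<forall>j\<in>s. j \<le> m" using assms finite_nat_set_iff_bounded_le by blast
  then have "s = {j\<in>s. j < Suc m}" by auto
  then show ?thesis using assms unfolding init_seg_def by blast
qed

lemma init_seg_trans:
  assumes "init_seg a b" "init_seg b c" shows "init_seg a c"
proof -
  obtain i i' where "a = {j\<in>b. j < i}" "b = {j\<in>c. j < i'}"
    using assms by (auto simp: init_seg_def)
  then have "a = {j\<in>c. j < min i i'}" by auto
  then show ?thesis using assms(1) unfolding init_seg_def by blast
qed

lemma init_seg_antisym: "init_seg a b \<Longrightarrow> init_seg b a \<Longrightarrow> a = b"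
  using init_seg_subset by blast

lemma init_seg_comparable:
  assumes "init_seg a c" "init_seg b c" shows "init_seg a b \<or> init_seg b a"
proof -
  obtain i i' where i: "a = {j\<in>c. j < i}" "b = {j\<in>c. j < i'}"
    using assms by (auto simp: init_seg_def)
  show ?thesis
  proof (cases "i \<le> i'")
    case True
    then have "a = {j\<in>b. j < i}" using i by auto
    then show ?thesis using assms(1) unfolding init_seg_def by blast
  next
    case False
    then have "b = {j\<in>a. j < i'}" using i by auto
    then show ?thesis using assms(2) unfolding init_seg_def by blast
  qed
qed

lemma init_seg_card_le: "init_seg a b \<Longrightarrow> finite b \<Longrightarrow> card a \<le> card b"
  by (simp add: card_mono init_seg_subset)

lemma init_seg_card_eq: "init_seg a b \<Longrightarrow> finite b \<Longrightarrow> card a = card b \<Longrightarrow> a = b"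
  by (simp add: card_subset_eq init_seg_subset)

lemma init_seg_insert_iff:
  assumes "finite t" "\<forall>j\<in>t. j < x"
  shows "init_seg u (insert x t) \<longleftrightarrow> init_seg u t \<or> u = insert x t"
proof
  assume "init_seg u (insert x t)"
  then obtain i where i: "u = {j\<in>insert x t. j < i}" and "finite u"
    by (auto simp: init_seg_def)
  show "init_seg u t \<or> u = insert x t"
  proof (cases "i \<le> x")
    case True
    then have "u = {j\<in>t. j < i}" using i by auto
    then show ?thesis using \<open>finite u\<close> unfolding init_seg_def by blast
  next
    case False
    then show ?thesis using i assms(2) by auto
  qed
next
  assume "init_seg u t \<or> u = insert x t"
  then show "init_seg u (insert x t)"
  proof
    assume "init_seg u t"
    then obtain i where "u = {j\<in>t. j < i}" "finite u" by (auto simp: init_seg_def)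
    then have "u = {j\<in>insert x t. j < min i x}" "finite u" using assms(2) by auto
    then show ?thesis unfolding init_seg_def by blast
  qed (use init_seg_refl assms(1) in simp)
qed

lemma card_insert_above: "finite (t::nat set) \<Longrightarrow> \<forall>j\<in>t. j < x \<Longrightarrow> card (insert x t) = Suc (card t)"
  by (metis card_insert_disjoint less_irrefl)

text \<open>A proper extension of st comparable with the child \<open>insert x st\<close> contains x as its least
  new element; so it cannot be comparable with two different children.\<close>

lemma init_seg_comparable_insert_least:
  assumes "init_seg st s" "s \<noteq> st" "finite st" "\<forall>j\<in>st. j < x"
    and "init_seg s (insert x st) \<or> init_seg (insert x st) s"
  shows "x \<in> s \<and> (\<forall>y\<in>s - st. x \<le> y)"
  using assms(5)
proof
  assume "init_seg s (insert x st)"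
  then have "init_seg s st \<or> s = insert x st"
    using init_seg_insert_iff[OF assms(3,4)] by blast
  then show ?thesis using assms(1,2) init_seg_antisym by auto
next
  assume "init_seg (insert x st) s"
  then obtain i where i: "insert x st = {j\<in>s. j < i}" by (auto simp: init_seg_def)
  then have "x \<in> s" "x < i" by auto
  moreover have "x \<le> y" if "y \<in> s - st" for y
  proof (rule ccontr)
    assume "\<not> x \<le> y"
    then have "y \<in> insert x st" using that i \<open>x < i\<close> by auto
    then show False using that \<open>\<not> x \<le> y\<close> by auto
  qed
  ultimately show ?thesis by blast
qed

lemma is_stem_unique:
  assumes "is_stem T s1" "is_stem T s2" shows "s1 = s2"
proof -
  have s1: "s1 \<in> T" "comparable_all T s1" and s2: "s2 \<in> T" "comparable_all T s2"
    using assms unfolding is_stem_def by blast+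
  have max1: "\<And>s. s \<in> T \<Longrightarrow> comparable_all T s \<Longrightarrow> init_seg s1 s \<Longrightarrow> s = s1"
    and max2: "\<And>s. s \<in> T \<Longrightarrow> comparable_all T s \<Longrightarrow> init_seg s2 s \<Longrightarrow> s = s2"
    using assms unfolding is_stem_def by blast+
  have "init_seg s1 s2 \<or> init_seg s2 s1"
    using s1(2) s2(1) unfolding comparable_all_def by blast
  then show ?thesis
    using max1[OF s2] max2[OF s1] by auto
qed

lemma stem_eqI:
  assumes "is_stem T s" shows "stem T = s"
  unfolding stem_def using assms by (rule the_equality) (rule is_stem_unique[OF _ assms])

lemma is_stemI_two_children:
  assumes "st \<in> S" "\<forall>t\<in>S. init_seg st t \<or> init_seg t st" "finite st"
    and "insert x st \<in> S" "insert y st \<in> S" "x \<noteq> y" "\<forall>j\<in>st. j < x" "\<forall>j\<in>st. j < y"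
  shows "is_stem S st"
proof -
  have "s = st" if s: "s \<in> S" "\<forall>t\<in>S. init_seg s t \<or> init_seg t s" "init_seg st s" for s
  proof (rule ccontr)
    assume "s \<noteq> st"
    have "init_seg s (insert x st) \<or> init_seg (insert x st) s"
      using s(2) assms(4) by blast
    then have x: "x \<in> s \<and> (\<forall>z\<in>s - st. x \<le> z)"
      by (rule init_seg_comparable_insert_least[OF s(3) \<open>s \<noteq> st\<close> assms(3,7)])
    have "init_seg s (insert y st) \<or> init_seg (insert y st) s"
      using s(2) assms(5) by blast
    then have y: "y \<in> s \<and> (\<forall>z\<in>s - st. y \<le> z)"
      by (rule init_seg_comparable_insert_least[OF s(3) \<open>s \<noteq> st\<close> assms(3,8)])
    have "x \<notin> st" "y \<notin> st" using assms(7,8) by blast+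
    with x y have "x \<le> y" "y \<le> x" by blast+
    then show False using assms(6) by simp
  qed
  then show ?thesis
    using assms(1,2) unfolding is_stem_def comparable_all_def by blast
qed

lemma
  assumes "nonprincipal_ultrafilter U"
  shows ultrafilter_UNIV: "UNIV \<in> U"
    and ultrafilter_empty: "{} \<notin> U"
    and ultrafilter_mono: "X \<in> U \<Longrightarrow> X \<subseteq> Y \<Longrightarrow> Y \<in> U"
    and ultrafilter_Int: "X \<in> U \<Longrightarrow> Y \<in> U \<Longrightarrow> X \<inter> Y \<in> U"
    and ultrafilter_Compl: "X \<notin> U \<Longrightarrow> - X \<in> U"
proof -
  note U = assms[unfolded nonprincipal_ultrafilter_def]
  show "UNIV \<in> U" "{} \<notin> U" using U by simp_all
  show "X \<in> U \<Longrightarrow> X \<subseteq> Y \<Longrightarrow> Y \<in> U"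
    using U by blast
  show "X \<in> U \<Longrightarrow> Y \<in> U \<Longrightarrow> X \<inter> Y \<in> U"
    using U by blast
  show "X \<notin> U \<Longrightarrow> - X \<in> U" using U by blast
qed

lemma ultrafilter_INT:
  assumes "nonprincipal_ultrafilter U" "finite K" "\<forall>k\<in>K. X k \<in> U"
  shows "(\<Inter>k\<in>K. X k) \<in> U"
  using assms(2,3)
  by (induction K rule: finite_induct) (auto intro: ultrafilter_UNIV ultrafilter_Int assms(1))

lemma nonstandard_eventually_above:
  assumes "nonprincipal_ultrafilter U" "nonstandard_hypernat U f" "finite s"
  shows "{i. \<forall>j\<in>s. j < f i} \<in> U"
proof -
  obtain m where m: "\<forall>j\<in>s. j \<le> m" using assms(3) finite_nat_set_iff_bounded_le by blast
  have "(\<Inter>k\<in>{..m}. {i. f i \<noteq> k}) \<in> U"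
    using assms(2) unfolding nonstandard_hypernat_def by (intro ultrafilter_INT[OF assms(1)]) auto
  moreover have "(\<Inter>k\<in>{..m}. {i. f i \<noteq> k}) \<subseteq> {i. \<forall>j\<in>s. j < f i}"
  proof
    fix i assume "i \<in> (\<Inter>k\<in>{..m}. {i. f i \<noteq> k})"
    then have "m < f i" by (auto simp: not_le[symmetric])
    then show "i \<in> {i. \<forall>j\<in>s. j < f i}" using m by fastforce
  qed
  ultimately show ?thesis using ultrafilter_mono[OF assms(1)] by blast
qed

lemma nonstandard_two_values:
  assumes "nonprincipal_ultrafilter U" "nonstandard_hypernat U f" "X \<in> U"
  obtains i j where "i \<in> X" "j \<in> X" "f i \<noteq> f j"
proof -
  obtain i where "i \<in> X" using assms(1,3) ultrafilter_empty by (metis ex_in_conv)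
  have "{j. f j \<noteq> f i} \<inter> X \<in> U"
    using assms unfolding nonstandard_hypernat_def by (blast intro: ultrafilter_Int)
  then obtain j where "j \<in> {j. f j \<noteq> f i} \<inter> X"
    using assms(1) ultrafilter_empty by (metis ex_in_conv)
  then show ?thesis using that \<open>i \<in> X\<close> by auto
qed

lemma alpha_treeI:
  assumes U: "nonprincipal_ultrafilter U"
    and nonstandard: "\<And>s. finite s \<Longrightarrow> nonstandard_hypernat U (alph s)"
    and tree: "is_tree S" and st: "st \<in> S" "\<forall>t\<in>S. init_seg st t \<or> init_seg t st"
    and children: "\<And>s. s \<in> S \<Longrightarrow> init_seg st s \<Longrightarrow> {i. insert (alph s i) s \<in> S} \<in> U"
  shows "alpha_tree U alph S" "stem S = st"
proof -
  have "finite st" using tree st(1) unfolding is_tree_def by blast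
  have "{i. insert (alph st i) st \<in> S} \<inter> {i. \<forall>j\<in>st. j < alph st i} \<in> U"
    using children[OF st(1) init_seg_refl[OF \<open>finite st\<close>]]
      nonstandard_eventually_above[OF U nonstandard[OF \<open>finite st\<close>] \<open>finite st\<close>]
    by (rule ultrafilter_Int[OF U])
  then obtain i j where "i \<in> {i. insert (alph st i) st \<in> S} \<inter> {i. \<forall>j\<in>st. j < alph st i}"
      "j \<in> {i. insert (alph st i) st \<in> S} \<inter> {i. \<forall>j\<in>st. j < alph st i}" "alph st i \<noteq> alph st j"
    by (rule nonstandard_two_values[OF U nonstandard[OF \<open>finite st\<close>]])
  then have "is_stem S st"
    by (intro is_stemI_two_children[OF st \<open>finite st\<close>]) auto
  then show "stem S = st" by (rule stem_eqI)
  have "st \<in> tree_above S st"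
    unfolding tree_above_def using st(1) init_seg_refl[OF \<open>finite st\<close>] by blast
  moreover have "{i. s \<union> {alph s i} \<in> S} \<in> U" if "s \<in> tree_above S st" for s
    using children that unfolding tree_above_def by simp
  ultimately show "alpha_tree U alph S"
    using \<open>is_stem S st\<close> \<open>stem S = st\<close> tree unfolding alpha_tree_def has_stem_def by blast
qed

locale alpha_tree_context =
  fixes U :: "nat set set" and alph :: "nat set \<Rightarrow> nat \<Rightarrow> nat" and T :: "nat set set"
  assumes ultrafilter: "nonprincipal_ultrafilter U"
    and nonstandard: "\<And>s. finite s \<Longrightarrow> nonstandard_hypernat U (alph s)"
    and alpha_tree_T: "alpha_tree U alph T"
begin

lemma stem_is_stem: "is_stem T (stem T)"
  using alpha_tree_T stem_eqI unfolding alpha_tree_def has_stem_def by metis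

lemma stem_in_tree: "stem T \<in> T"
  and comparable_stem: "t \<in> T \<Longrightarrow> init_seg (stem T) t \<or> init_seg t (stem T)"
  using stem_is_stem unfolding is_stem_def comparable_all_def by auto

lemma finite_node: "t \<in> T \<Longrightarrow> finite t"
  using alpha_tree_T unfolding alpha_tree_def is_tree_def by blast

lemma tree_init_seg_closed: "t \<in> T \<Longrightarrow> init_seg s t \<Longrightarrow> s \<in> T"
  using alpha_tree_T unfolding alpha_tree_def is_tree_def by blast

lemma alpha_children: "s \<in> T \<Longrightarrow> init_seg (stem T) s \<Longrightarrow> {i. insert (alph s i) s \<in> T} \<in> U"
  using alpha_tree_T unfolding alpha_tree_def tree_above_def by simp

primrec colour :: "nat set set \<Rightarrow> nat \<Rightarrow> nat set \<Rightarrow> bool" where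
  "colour A 0 t = (t \<in> A)"
| "colour A (Suc k) t = ({i. insert (alph t i) t \<in> T \<and> colour A k (insert (alph t i) t)} \<in> U)"

lemma colour_eventually_children:
  assumes "s \<in> T" "init_seg (stem T) s"
  shows "{i. insert (alph s i) s \<in> T \<and> colour A k (insert (alph s i) s) = colour A (Suc k) s} \<in> U"
proof (cases "colour A (Suc k) s")
  case True
  then show ?thesis by (auto elim: ultrafilter_mono[OF ultrafilter])
next
  case False
  then have "- {i. insert (alph s i) s \<in> T \<and> colour A k (insert (alph s i) s)} \<inter>
      {i. insert (alph s i) s \<in> T} \<in> U"
    using alpha_children[OF assms] by (auto intro: ultrafilter_Int[OF ultrafilter] ultrafilter_Compl[OF ultrafilter])
  then show ?thesis using False by (auto elim: ultrafilter_mono[OF ultrafilter])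
qed

definition pruned :: "nat set set \<Rightarrow> nat \<Rightarrow> nat set set" where
  "pruned A n = {t \<in> T. \<forall>u. init_seg (stem T) u \<longrightarrow> init_seg u t \<longrightarrow> card u \<le> n \<longrightarrow>
      colour A (n - card u) u = colour A (n - card (stem T)) (stem T)}"

lemma pruned_subset: "pruned A n \<subseteq> T"
  unfolding pruned_def by blast

lemma stem_in_pruned: "stem T \<in> pruned A n"
  unfolding pruned_def using stem_in_tree init_seg_antisym by blast

lemma pruned_init_seg_closed: "t \<in> pruned A n \<Longrightarrow> init_seg s t \<Longrightarrow> s \<in> pruned A n"
  unfolding pruned_def using tree_init_seg_closed init_seg_trans by blast

lemma is_tree_pruned: "is_tree (pruned A n)"
  unfolding is_tree_def
  using stem_in_pruned pruned_subset finite_node pruned_init_seg_closed by blast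

lemma insert_in_pruned:
  assumes s: "s \<in> pruned A n" "init_seg (stem T) s" "\<forall>j\<in>s. j < x" "insert x s \<in> T"
    and colour: "card s < n \<Longrightarrow>
      colour A (n - Suc (card s)) (insert x s) = colour A (n - card (stem T)) (stem T)"
  shows "insert x s \<in> pruned A n"
proof -
  have "finite s" using s(1) pruned_subset finite_node by blast
  note segs = init_seg_insert_iff[OF this s(3)]
  show ?thesis
    unfolding pruned_def
  proof (intro CollectI conjI allI impI)
    fix u assume u: "init_seg (stem T) u" "init_seg u (insert x s)" "card u \<le> n"
    from u(2) segs consider "init_seg u s" | "u = insert x s" by blast
    then show "colour A (n - card u) u = colour A (n - card (stem T)) (stem T)"
    proof cases
      case 1
      then show ?thesis using s(1) u unfolding pruned_def by blast
    next
      case 2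
      then show ?thesis using colour u(3) card_insert_above[OF \<open>finite s\<close> s(3)] by simp
    qed
  qed (rule s(4))
qed

lemma pruned_alpha_children:
  assumes s: "s \<in> pruned A n" "init_seg (stem T) s"
  shows "{i. insert (alph s i) s \<in> pruned A n} \<in> U"
proof -
  have "s \<in> T" "finite s" using s(1) pruned_subset finite_node by auto
  define above where "above = {i. \<forall>j\<in>s. j < alph s i}"
  have "above \<in> U"
    unfolding above_def using nonstandard_eventually_above ultrafilter nonstandard \<open>finite s\<close> by blast
  show ?thesis
  proof (cases "card s < n")
    case False
    then have "above \<inter> {i. insert (alph s i) s \<in> T} \<subseteq> {i. insert (alph s i) s \<in> pruned A n}"
      using insert_in_pruned[OF s] unfolding above_def by blast
    then show ?thesis
      using \<open>above \<in> U\<close> alpha_children[OF \<open>s \<in> T\<close> s(2)]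
      by (meson ultrafilter_Int ultrafilter_mono ultrafilter)
  next
    case True
    then obtain k where k: "n - card s = Suc k" "n - Suc (card s) = k"
      by (metis Suc_diff_Suc)
    have "colour A (Suc k) s = colour A (n - card (stem T)) (stem T)"
      using s init_seg_refl[OF \<open>finite s\<close>] True k(1) unfolding pruned_def by force
    then have "above \<inter> {i. insert (alph s i) s \<in> T \<and>
        colour A k (insert (alph s i) s) = colour A (Suc k) s} \<subseteq> {i. insert (alph s i) s \<in> pruned A n}"
      using insert_in_pruned[OF s] k(2) unfolding above_def by auto
    then show ?thesis
      using \<open>above \<in> U\<close> colour_eventually_children[OF \<open>s \<in> T\<close> s(2)]
      by (meson ultrafilter_Int ultrafilter_mono ultrafilter)
  qed
qed

lemma pruned_alpha_tree: "alpha_tree U alph (pruned A n)"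
  and stem_pruned: "stem (pruned A n) = stem T"
  using alpha_treeI[OF ultrafilter nonstandard is_tree_pruned stem_in_pruned _ pruned_alpha_children]
    comparable_stem pruned_subset by (simp_all add: subset_iff)

lemma level_pruned_homogeneous: "level (pruned A n) n \<subseteq> A \<or> level (pruned A n) n \<inter> A = {}"
proof -
  have node: "t \<in> T" "finite t" "card t = n" if "t \<in> level (pruned A n) n" for t
    using that pruned_subset finite_node unfolding level_def by auto
  have "finite (stem T)" using stem_in_tree finite_node by blast
  show ?thesis
  proof (cases "n \<le> card (stem T)")
    case True
    \<comment> \<open>Level n then lies below the stem, where it has at most one node.\<close>
    have below: "init_seg t (stem T)" if "t \<in> level (pruned A n) n" for t
    proof (cases "init_seg (stem T) t")
      case True
      then have "stem T = t"
        using init_seg_card_le[OF True] init_seg_card_eq[OF True] node[OF that] \<open>n \<le> card (stem T)\<close>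
        by simp
      then show ?thesis using init_seg_refl[OF \<open>finite (stem T)\<close>] by simp
    next
      case False
      then show ?thesis using comparable_stem[OF node(1)[OF that]] by blast
    qed
    have "t = t'" if "t \<in> level (pruned A n) n" "t' \<in> level (pruned A n) n" for t t'
      using init_seg_comparable[OF below[OF that(1)] below[OF that(2)]]
        init_seg_card_eq node[OF that(1)] node[OF that(2)] by metis
    then show ?thesis by blast
  next
    case False
    have "t \<in> A \<longleftrightarrow> colour A (n - card (stem T)) (stem T)" if "t \<in> level (pruned A n) n" for t
    proof -
      have "\<not> init_seg t (stem T)"
        using init_seg_card_le[OF _ \<open>finite (stem T)\<close>, of t] node[OF that] False by auto
      then have "init_seg (stem T) t" using comparable_stem[OF node(1)[OF that]] by blast
      moreover have "t \<in> pruned A n" using that unfolding level_def by blast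
      ultimately have "colour A (n - card t) t = colour A (n - card (stem T)) (stem T)"
        using init_seg_refl[OF node(2)[OF that]] node(3)[OF that] unfolding pruned_def by blast
      then show ?thesis using node(3)[OF that] by simp
    qed
    then show ?thesis by blast
  qed
qed

end

theorem mainTheorem14:
  fixes U :: "nat set set" and alph :: "nat set \<Rightarrow> nat \<Rightarrow> nat"
    and n :: nat and A T :: "nat set set"
  assumes "nonprincipal_ultrafilter U"
    and "\<forall>s. finite s \<longrightarrow> nonstandard_hypernat U (alph s)"
    and "A \<subseteq> {s. finite s \<and> card s = n}"
    and "alpha_tree U alph T"
  shows "\<exists>S. alpha_tree U alph S \<and> S \<subseteq> T \<and> stem S = stem T \<and>
           (level S n \<subseteq> A \<or> level S n \<inter> A = {})"
proof -
  interpret alpha_tree_context U alph T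
    using assms(1,2,4) by unfold_locales auto
  show ?thesis
    using pruned_alpha_tree stem_pruned pruned_subset level_pruned_homogeneous by blast
qed

end
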